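(* Let $T=(A_1;A_2;\dots;A_p)$ be an $m\times p\times n$ quaternion tensor and $r\ge1$ an integer. Then $\mathrm{rank}(T)\le r$ if and only if there exist $r\times r$ diagonal matrices $D_1,\dots,D_p$ with quaternion entries, an $m\times r$ quaternion matrix $P$ and an $r\times n$ quaternion matrix $Q$ such that $A_k=PD_kQ$ for all $k=1,\dots,p$.
   Context: $\mathbb{H}$ denotes the real quaternions. An $n_1\times n_2\times n_3$ quaternion tensor is an array $T=(T_{ijk})$ with entries in $\mathbb{H}$, $1\le i\le n_1$, $1\le j\le n_2$, $1\le k\le n_3$; it is written $T=(A_1;\dots;A_{n_2})$ where the frontal slice $A_j$ is the $n_1\times n_3$ matrix $(T_{ijk})_{i,k}$. A nonzero tensor is simple if $T_{ijk}=a_ib_jc_k$ (quaternion product in this order) for some $\vec a\in\mathbb{H}^{n_1},\vec b\in\mathbb{H}^{n_2},\vec c\in\mathbb{H}^{n_3}$. The rank of $T$ is the least number of simple tensors summing to $T$ (rank of zero tensor is $0$). *)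

theory Defs
  imports Main "HOL.Real"
begin

datatype quat = Quat (Re: real) (Im1: real) (Im2: real) (Im3: real)

lemma quat_eqI: "Re x = Re y \<Longrightarrow> Im1 x = Im1 y \<Longrightarrow> Im2 x = Im2 y \<Longrightarrow> Im3 x = Im3 y \<Longrightarrow> x = y"
  by (cases x, cases y) simp

instantiation quat :: ring_1
begin

definition "0 = Quat 0 0 0 0"
definition "1 = Quat 1 0 0 0"
definition "x + y = Quat (Re x + Re y) (Im1 x + Im1 y) (Im2 x + Im2 y) (Im3 x + Im3 y)"
definition "- x = Quat (- Re x) (- Im1 x) (- Im2 x) (- Im3 x)"
definition "x - y = Quat (Re x - Re y) (Im1 x - Im1 y) (Im2 x - Im2 y) (Im3 x - Im3 y)"
text \<open>Hamilton product: i^2 = j^2 = k^2 = ijk = -1.\<close>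
definition "x * y = Quat
  (Re x * Re y - Im1 x * Im1 y - Im2 x * Im2 y - Im3 x * Im3 y)
  (Re x * Im1 y + Im1 x * Re y + Im2 x * Im3 y - Im3 x * Im2 y)
  (Re x * Im2 y - Im1 x * Im3 y + Im2 x * Re y + Im3 x * Im1 y)
  (Re x * Im3 y + Im1 x * Im2 y - Im2 x * Im1 y + Im3 x * Re y)"

instance
  by standard (auto intro!: quat_eqI simp: zero_quat_def one_quat_def plus_quat_def
      uminus_quat_def minus_quat_def times_quat_def algebra_simps)

end

text \<open>An m x p x n quaternion tensor is represented by a function
  T :: nat => nat => nat => quat, of which only the entries T i j k with
  i < m, j < p, k < n are relevant (0-based indices). The frontal slice
  A_j is the m x n matrix (T i j k)_{i,k}.\<close>

definition simple_tensor :: "nat \<Rightarrow> nat \<Rightarrow> nat \<Rightarrow> (nat \<Rightarrow> nat \<Rightarrow> nat \<Rightarrow> quat) \<Rightarrow> bool" where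
  "simple_tensor m p n S \<longleftrightarrow>
     (\<exists>i<m. \<exists>j<p. \<exists>k<n. S i j k \<noteq> 0) \<and>
     (\<exists>a b c :: nat \<Rightarrow> quat. \<forall>i<m. \<forall>j<p. \<forall>k<n. S i j k = a i * b j * c k)"

definition tensor_rank :: "nat \<Rightarrow> nat \<Rightarrow> nat \<Rightarrow> (nat \<Rightarrow> nat \<Rightarrow> nat \<Rightarrow> quat) \<Rightarrow> nat" where
  "tensor_rank m p n T = (LEAST r. \<exists>S :: nat \<Rightarrow> nat \<Rightarrow> nat \<Rightarrow> nat \<Rightarrow> quat.
      (\<forall>l<r. simple_tensor m p n (S l)) \<and>
      (\<forall>i<m. \<forall>j<p. \<forall>k<n. T i j k = (\<Sum>l<r. S l i j k)))"

end

theory Submission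
  imports Defs
begin

text \<open>A sum of r triple products is a tensor of rank at most r once the vanishing
  summands are discarded, and every tensor is such a sum; hence rank at most r means
  being a sum of r triple products. Writing the l-th product as
  a_l(i) b_l(k) c_l(j), the slice A_k is P D_k Q with P = (a_l(i)), Q = (c_l(j)) and
  D_k = diag(b_1(k), ..., b_r(k)); conversely P D_k Q with diagonal D_k is read as such a
  sum. The order of the three factors matters over the quaternions, and it is the same
  on both sides.\<close>

definition product_tensor :: "nat \<Rightarrow> nat \<Rightarrow> nat \<Rightarrow> (nat \<Rightarrow> nat \<Rightarrow> nat \<Rightarrow> quat) \<Rightarrow> bool" where
  "product_tensor m p n S \<longleftrightarrow>
     (\<exists>a b c :: nat \<Rightarrow> quat. \<forall>i<m. \<forall>j<p. \<forall>k<n. S i j k = a i * b j * c k)"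

definition tensor_sum_of :: "nat \<Rightarrow> nat \<Rightarrow> nat \<Rightarrow> nat \<Rightarrow> (nat \<Rightarrow> nat \<Rightarrow> nat \<Rightarrow> nat \<Rightarrow> quat)
    \<Rightarrow> (nat \<Rightarrow> nat \<Rightarrow> nat \<Rightarrow> quat) \<Rightarrow> bool" where
  "tensor_sum_of m p n r S T \<longleftrightarrow> (\<forall>i<m. \<forall>j<p. \<forall>k<n. T i j k = (\<Sum>l<r. S l i j k))"

lemma simple_tensor_imp_product_tensor: "simple_tensor m p n S \<Longrightarrow> product_tensor m p n S"
  unfolding simple_tensor_def product_tensor_def by blast

lemma product_tensor_zero: "product_tensor m p n (\<lambda>i j k. 0)"
  unfolding product_tensor_def by (intro exI[of _ "\<lambda>_. 0"]) simp

lemma sum_of_product_tensors_imp_sum_of_simple_tensors: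
  assumes "\<forall>l<r. product_tensor m p n (S l)" and "tensor_sum_of m p n r S T"
  shows "\<exists>q\<le>r. \<exists>S'. (\<forall>l<q. simple_tensor m p n (S' l)) \<and> tensor_sum_of m p n q S' T"
  using assms
proof (induction r arbitrary: T)
  case 0
  then show ?case by (intro exI[of _ 0]) auto
next
  case (Suc r)
  define T' where "T' = (\<lambda>i j k. \<Sum>l<r. S l i j k)"
  obtain q S' where q: "q \<le> r" "\<forall>l<q. simple_tensor m p n (S' l)" "tensor_sum_of m p n q S' T'"
    using Suc.IH[of T'] Suc.prems(1) unfolding T'_def tensor_sum_of_def by auto
  have T_split: "\<forall>i<m. \<forall>j<p. \<forall>k<n. T i j k = T' i j k + S r i j k"
    using Suc.prems(2) unfolding T'_def tensor_sum_of_def by simp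
  show ?case
  proof (cases "\<forall>i<m. \<forall>j<p. \<forall>k<n. S r i j k = 0")
    case True
    then show ?thesis using q T_split unfolding tensor_sum_of_def by (intro exI[of _ q]) auto
  next
    case False
    define S'' where "S'' = S'(q := S r)"
    have "\<forall>l<Suc q. simple_tensor m p n (S'' l)"
      using q(2) False Suc.prems(1) unfolding S''_def simple_tensor_def product_tensor_def
      by (auto simp: less_Suc_eq)
    moreover have "(\<Sum>l<q. S'' l i j k) = (\<Sum>l<q. S' l i j k)" for i j k
      by (rule sum.cong) (auto simp: S''_def)
    then have "tensor_sum_of m p n (Suc q) S'' T"
      using T_split q(3) unfolding tensor_sum_of_def by (simp add: S''_def)
    ultimately show ?thesis using q(1) by (intro exI[of _ "Suc q"]) auto
  qed
qed

lemma sum_of_product_tensors_imp_tensor_rank_le: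
  assumes "\<forall>l<r. product_tensor m p n (S l)" and "tensor_sum_of m p n r S T"
  shows "tensor_rank m p n T \<le> r"
proof -
  obtain q S' where "q \<le> r" "\<forall>l<q. simple_tensor m p n (S' l)" "tensor_sum_of m p n q S' T"
    using sum_of_product_tensors_imp_sum_of_simple_tensors[OF assms] by blast
  then have "tensor_rank m p n T \<le> q"
    unfolding tensor_rank_def tensor_sum_of_def by (intro Least_le) blast
  with \<open>q \<le> r\<close> show ?thesis by simp
qed

lemma sum_lessThan_mult_div_mod:
  assumes "i < m" "j < (p::nat)"
  shows "(\<Sum>l<m*p. if l div p = i \<and> l mod p = j then x else 0) = (x::'a::comm_monoid_add)"
proof -
  have "l div p = i \<and> l mod p = j \<longleftrightarrow> l = i*p + j" for l
    using assms(2) div_mult_mod_eq[of l p] by auto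
  moreover have "i*p + j < m*p"
  proof -
    have "i*p + j < (i+1)*p" using assms(2) by simp
    also have "\<dots> \<le> m*p" using assms(1) by (intro mult_right_mono) auto
    finally show ?thesis .
  qed
  ultimately show ?thesis by simp
qed

text \<open>The m p summands single out one fibre (T i j k)_k each.\<close>

lemma sum_of_product_tensors_exists:
  "\<exists>S. (\<forall>l<m*p. product_tensor m p n (S l)) \<and> tensor_sum_of m p n (m*p) S T"
proof -
  define S where "S = (\<lambda>l i j k. (if i = l div p then 1 else 0) * (if j = l mod p then 1 else 0)
      * T (l div p) (l mod p) k :: quat)"
  have "product_tensor m p n (S l)" for l
    unfolding product_tensor_def S_def
    by (intro exI[of _ "\<lambda>i. if i = l div p then 1 else 0"]
        exI[of _ "\<lambda>j. if j = l mod p then 1 else 0"] exI[of _ "T (l div p) (l mod p)"]) simp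
  moreover have "tensor_sum_of m p n (m*p) S T"
    unfolding tensor_sum_of_def
  proof (intro allI impI)
    fix i j k assume ij: "i < m" "j < p"
    have "(\<Sum>l<m*p. S l i j k) = (\<Sum>l<m*p. if l div p = i \<and> l mod p = j then T i j k else 0)"
      by (rule sum.cong) (auto simp: S_def)
    then show "T i j k = (\<Sum>l<m*p. S l i j k)"
      using sum_lessThan_mult_div_mod[OF ij, of "T i j k"] by simp
  qed
  ultimately show ?thesis by blast
qed

lemma tensor_rank_decomposition:
  "\<exists>S. (\<forall>l<tensor_rank m p n T. simple_tensor m p n (S l)) \<and>
       tensor_sum_of m p n (tensor_rank m p n T) S T"
proof -
  have "\<exists>q S. (\<forall>l<q. simple_tensor m p n (S l)) \<and> tensor_sum_of m p n q S T"
    using sum_of_product_tensors_exists sum_of_product_tensors_imp_sum_of_simple_tensors by blast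
  from LeastI_ex[OF this[unfolded tensor_sum_of_def]] show ?thesis
    unfolding tensor_rank_def tensor_sum_of_def .
qed

theorem tensor_rank_le_iff_sum_of_product_tensors:
  "tensor_rank m p n T \<le> r \<longleftrightarrow>
     (\<exists>S. (\<forall>l<r. product_tensor m p n (S l)) \<and> tensor_sum_of m p n r S T)"
proof
  assume r: "tensor_rank m p n T \<le> r"
  obtain S where S: "\<forall>l<tensor_rank m p n T. simple_tensor m p n (S l)"
      "tensor_sum_of m p n (tensor_rank m p n T) S T"
    using tensor_rank_decomposition by blast
  define S' where "S' = (\<lambda>l. if l < tensor_rank m p n T then S l else (\<lambda>i j k. 0))"
  have "\<forall>l<r. product_tensor m p n (S' l)"
    using S(1) by (simp add: S'_def simple_tensor_imp_product_tensor product_tensor_zero)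
  moreover have "(\<Sum>l<r. S' l i j k) = (\<Sum>l<tensor_rank m p n T. S l i j k)" for i j k
  proof -
    have "(\<Sum>l<r. S' l i j k) = (\<Sum>l<tensor_rank m p n T. S' l i j k)"
      using r by (intro sum.mono_neutral_right) (auto simp: S'_def)
    then show ?thesis by (simp add: S'_def)
  qed
  then have "tensor_sum_of m p n r S' T"
    using S(2) unfolding tensor_sum_of_def by simp
  ultimately show "\<exists>S. (\<forall>l<r. product_tensor m p n (S l)) \<and> tensor_sum_of m p n r S T"
    by blast
qed (blast intro: sum_of_product_tensors_imp_tensor_rank_le)

lemma sum_diagonal_collapse:
  fixes D :: "nat \<Rightarrow> 'a::semiring_0"
  assumes "s < r" "\<forall>t<r. t \<noteq> s \<longrightarrow> D t = 0"
  shows "(\<Sum>t<r. a * D t * b t) = a * D s * b s"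
proof -
  have "(\<Sum>t<r. a * D t * b t) = (\<Sum>t<r. if t = s then a * D s * b s else 0)"
    by (rule sum.cong) (use assms in auto)
  also have "\<dots> = a * D s * b s" using assms(1) by simp
  finally show ?thesis .
qed

theorem sum_of_product_tensors_iff_diagonal_factorization:
  "(\<exists>S. (\<forall>l<r. product_tensor m p n (S l)) \<and> tensor_sum_of m p n r S T) \<longleftrightarrow>
   (\<exists>(D :: nat \<Rightarrow> nat \<Rightarrow> nat \<Rightarrow> quat) P Q.
       (\<forall>k<p. \<forall>s<r. \<forall>t<r. s \<noteq> t \<longrightarrow> D k s t = 0) \<and>
       (\<forall>k<p. \<forall>i<m. \<forall>l<n. T i k l = (\<Sum>s<r. \<Sum>t<r. P i s * D k s t * Q t l)))"
proof
  assume "\<exists>S. (\<forall>l<r. product_tensor m p n (S l)) \<and> tensor_sum_of m p n r S T"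
  then obtain S where S: "\<forall>l<r. product_tensor m p n (S l)" "tensor_sum_of m p n r S T"
    by blast
  obtain a b c where abc:
    "\<forall>l<r. \<forall>i<m. \<forall>j<p. \<forall>k<n. S l i j k = a l i * b l j * c l k"
    using S(1) unfolding product_tensor_def by metis
  define D where "D = (\<lambda>k s t. if s = t then b s k else 0)"
  have "T i k l = (\<Sum>s<r. \<Sum>t<r. a s i * D k s t * c t l)" if "k < p" "i < m" "l < n" for k i l
  proof -
    have "(\<Sum>s<r. \<Sum>t<r. a s i * D k s t * c t l) = (\<Sum>s<r. a s i * D k s s * c s l)"
      by (intro sum.cong refl sum_diagonal_collapse) (auto simp: D_def)
    also have "\<dots> = (\<Sum>s<r. S s i k l)"
      using abc that by (intro sum.cong) (auto simp: D_def)
    finally show ?thesis using S(2) that unfolding tensor_sum_of_def by simp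
  qed
  then show "\<exists>D P Q. (\<forall>k<p. \<forall>s<r. \<forall>t<r. s \<noteq> t \<longrightarrow> D k s t = 0) \<and>
       (\<forall>k<p. \<forall>i<m. \<forall>l<n. T i k l = (\<Sum>s<r. \<Sum>t<r. P i s * D k s t * Q t l))"
    by (intro exI[of _ D] exI[of _ "\<lambda>i s. a s i"] exI[of _ "\<lambda>t l. c t l"]) (auto simp: D_def)
next
  assume "\<exists>(D :: nat \<Rightarrow> nat \<Rightarrow> nat \<Rightarrow> quat) P Q.
       (\<forall>k<p. \<forall>s<r. \<forall>t<r. s \<noteq> t \<longrightarrow> D k s t = 0) \<and>
       (\<forall>k<p. \<forall>i<m. \<forall>l<n. T i k l = (\<Sum>s<r. \<Sum>t<r. P i s * D k s t * Q t l))"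
  then obtain D P Q where D: "\<forall>k<p. \<forall>s<r. \<forall>t<r. s \<noteq> t \<longrightarrow> D k s t = (0::quat)"
    and T: "\<forall>k<p. \<forall>i<m. \<forall>l<n. T i k l = (\<Sum>s<r. \<Sum>t<r. P i s * D k s t * Q t l)"
    by blast
  define S where "S = (\<lambda>s i j k. P i s * D j s s * Q s k)"
  have "product_tensor m p n (S l)" for l
    unfolding product_tensor_def S_def
    by (intro exI[of _ "\<lambda>i. P i l"] exI[of _ "\<lambda>j. D j l l"] exI[of _ "Q l"]) simp
  moreover have "tensor_sum_of m p n r S T"
    unfolding tensor_sum_of_def
  proof (intro allI impI)
    fix i j k assume "i < m" "j < p" "k < n"
    moreover have "(\<Sum>s<r. \<Sum>t<r. P i s * D j s t * Q t k) = (\<Sum>s<r. S s i j k)"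
      unfolding S_def by (intro sum.cong refl sum_diagonal_collapse) (use D \<open>j < p\<close> in auto)
    ultimately show "T i j k = (\<Sum>l<r. S l i j k)" using T by simp
  qed
  ultimately show "\<exists>S. (\<forall>l<r. product_tensor m p n (S l)) \<and> tensor_sum_of m p n r S T"
    by blast
qed

theorem mainTheorem2:
  fixes m p n r :: nat and T :: "nat \<Rightarrow> nat \<Rightarrow> nat \<Rightarrow> quat"
  assumes "r \<ge> 1"
  shows "tensor_rank m p n T \<le> r \<longleftrightarrow>
    (\<exists>(D :: nat \<Rightarrow> nat \<Rightarrow> nat \<Rightarrow> quat) (P :: nat \<Rightarrow> nat \<Rightarrow> quat) (Q :: nat \<Rightarrow> nat \<Rightarrow> quat).
       (\<forall>k<p. \<forall>s<r. \<forall>t<r. s \<noteq> t \<longrightarrow> D k s t = 0) \<and>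
       (\<forall>k<p. \<forall>i<m. \<forall>l<n. T i k l = (\<Sum>s<r. \<Sum>t<r. P i s * D k s t * Q t l)))"
  unfolding tensor_rank_le_iff_sum_of_product_tensors
  by (rule sum_of_product_tensors_iff_diagonal_factorization)

end
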